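(* Let $f:M\to M$ be a partially hyperbolic endomorphism of a closed manifold $M$. Then the dimensions of $E^s_f(x_0)$, $E^c_f(x_0)$ and $E^u_f(x_0)$ are constant, independent of $\bar x=(x_n)\in M^f$.
   Context: A $C^1$ local diffeomorphism $f:M\to M$ is a partially hyperbolic endomorphism if there are a Riemannian metric and constants $0<\nu<\gamma_1\le\gamma_2<\mu$, $\nu<1<\mu$, $C>1$ such that for every orbit $(x_n)_{n\in\mathbb{Z}}$ ($f(x_n)=x_{n+1}$) there is a splitting $T_{x_n}M=E^s_f(x_n)\oplus E^c_f(x_n)\oplus E^u_f(x_n)$, $Df$-invariant along the orbit, with $\|Df^n_{x_i}v^s\|\le C\nu^n\|v^s\|$, $C^{-1}\gamma_1^n\|v^c\|\le\|Df^n_{x_i}v^c\|\le C\gamma_2^n\|v^c\|$, $C^{-1}\mu^n\|v^u\|\le\|Df^n_{x_i}v^u\|$ for all $n\ge0$, $i\in\mathbb{Z}$, $v^\ast\in E^\ast_f(x_i)$. $M^f=\{(x_n)_{n\in\mathbb{Z}}:f(x_n)=x_{n+1}\}$ is the set of all orbits. *)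

theory Defs
  imports "HOL-Analysis.Analysis"
begin

text \<open>Closed manifolds are modelled as compact, connected C^1 embedded submanifolds
  (without boundary) of a Euclidean space (Whitney embedding).\<close>

definition C1_on :: "('a::euclidean_space \<Rightarrow> 'b::euclidean_space) \<Rightarrow> 'a set \<Rightarrow> bool" where
  "C1_on f S \<longleftrightarrow> (\<exists>f'. (\<forall>x\<in>S. (f has_derivative blinfun_apply (f' x)) (at x))
                        \<and> continuous_on S f')"

definition C1_submanifold :: "'a::euclidean_space set \<Rightarrow> nat \<Rightarrow> bool" where
  "C1_submanifold M d \<longleftrightarrow>
     (\<forall>x\<in>M. \<exists>U V (\<phi>::'a \<Rightarrow> 'a) \<psi> L. open U \<and> x \<in> U \<and> open V \<and> subspace L \<and> dim L = d
        \<and> \<phi> ` U = V \<and> (\<forall>y\<in>U. \<psi> (\<phi> y) = y) \<and> (\<forall>z\<in>V. \<phi> (\<psi> z) = z)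
        \<and> C1_on \<phi> U \<and> C1_on \<psi> V \<and> \<phi> ` (M \<inter> U) = V \<inter> L)"

definition closed_manifold :: "'a::euclidean_space set \<Rightarrow> bool" where
  "closed_manifold M \<longleftrightarrow> compact M \<and> connected M \<and> M \<noteq> {} \<and> (\<exists>d. C1_submanifold M d)"

definition tangent_space :: "'a::euclidean_space set \<Rightarrow> 'a \<Rightarrow> 'a set" where
  "tangent_space M x = {v. \<exists>\<gamma>::real \<Rightarrow> 'a. \<gamma> 0 = x \<and> (\<forall>t. \<gamma> t \<in> M)
                               \<and> (\<gamma> has_vector_derivative v) (at 0)}"

text \<open>F is a C^1 local diffeomorphism of M: F maps M into M, it is C^1 on an open
  neighbourhood W of M with derivative F', and the derivative maps each tangent space
  bijectively onto the tangent space at the image point (inverse function theorem).\<close>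
definition C1_local_diffeo ::
  "'a::euclidean_space set \<Rightarrow> ('a \<Rightarrow> 'a) \<Rightarrow> ('a \<Rightarrow> 'a \<Rightarrow>\<^sub>L 'a) \<Rightarrow> bool" where
  "C1_local_diffeo M F F' \<longleftrightarrow> F ` M \<subseteq> M \<and>
     (\<exists>W. open W \<and> M \<subseteq> W \<and> (\<forall>x\<in>W. (F has_derivative blinfun_apply (F' x)) (at x))
          \<and> continuous_on W F') \<and>
     (\<forall>x\<in>M. inj_on (blinfun_apply (F' x)) (tangent_space M x)
          \<and> blinfun_apply (F' x) ` tangent_space M x = tangent_space M (F x))"

definition riemannian_metric :: "'a::euclidean_space set \<Rightarrow> ('a \<Rightarrow> 'a \<Rightarrow> 'a \<Rightarrow> real) \<Rightarrow> bool" where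
  "riemannian_metric M g \<longleftrightarrow>
     (\<forall>x\<in>M. (\<forall>v w. g x v w = g x w v) \<and> (\<forall>w. linear (\<lambda>v. g x v w))
            \<and> (\<forall>v\<in>tangent_space M x. v \<noteq> 0 \<longrightarrow> g x v v > 0))
     \<and> continuous_on (M \<times> UNIV \<times> UNIV) (\<lambda>(x, v, w). g x v w)"

definition rnorm :: "('a::euclidean_space \<Rightarrow> 'a \<Rightarrow> 'a \<Rightarrow> real) \<Rightarrow> 'a \<Rightarrow> 'a \<Rightarrow> real" where
  "rnorm g x v = sqrt (g x v v)"

definition orbits :: "'a set \<Rightarrow> ('a \<Rightarrow> 'a) \<Rightarrow> (int \<Rightarrow> 'a) set" where
  "orbits M F = {xs. (\<forall>n. xs n \<in> M) \<and> (\<forall>n. F (xs n) = xs (n + 1))}"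

primrec orbit_D :: "('a::euclidean_space \<Rightarrow> 'a \<Rightarrow>\<^sub>L 'a) \<Rightarrow> (int \<Rightarrow> 'a) \<Rightarrow> int \<Rightarrow> nat \<Rightarrow> 'a \<Rightarrow> 'a" where
  "orbit_D F' xs i 0 = (\<lambda>v. v)"
| "orbit_D F' xs i (Suc k) = (\<lambda>v. blinfun_apply (F' (xs (i + int k))) (orbit_D F' xs i k v))"

definition ph_splitting ::
  "'a::euclidean_space set \<Rightarrow> ('a \<Rightarrow> 'a \<Rightarrow>\<^sub>L 'a) \<Rightarrow> ('a \<Rightarrow> 'a \<Rightarrow> 'a \<Rightarrow> real) \<Rightarrow>
   real \<Rightarrow> real \<Rightarrow> real \<Rightarrow> real \<Rightarrow> real \<Rightarrow> (int \<Rightarrow> 'a) \<Rightarrow>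
   (int \<Rightarrow> 'a set) \<Rightarrow> (int \<Rightarrow> 'a set) \<Rightarrow> (int \<Rightarrow> 'a set) \<Rightarrow> bool" where
  "ph_splitting M F' g \<nu> \<gamma>\<^sub>1 \<gamma>\<^sub>2 \<mu> C xs Es Ec Eu \<longleftrightarrow>
     (\<forall>n. subspace (Es n) \<and> subspace (Ec n) \<and> subspace (Eu n)
        \<and> {a + b + c | a b c. a \<in> Es n \<and> b \<in> Ec n \<and> c \<in> Eu n} = tangent_space M (xs n)
        \<and> dim (Es n) + dim (Ec n) + dim (Eu n) = dim (tangent_space M (xs n))
        \<and> blinfun_apply (F' (xs n)) ` Es n = Es (n + 1)
        \<and> blinfun_apply (F' (xs n)) ` Ec n = Ec (n + 1)
        \<and> blinfun_apply (F' (xs n)) ` Eu n = Eu (n + 1))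
   \<and> (\<forall>i k. \<forall>v\<in>Es i. rnorm g (xs (i + int k)) (orbit_D F' xs i k v) \<le> C * \<nu> ^ k * rnorm g (xs i) v)
   \<and> (\<forall>i k. \<forall>v\<in>Ec i. \<gamma>\<^sub>1 ^ k * rnorm g (xs i) v / C \<le> rnorm g (xs (i + int k)) (orbit_D F' xs i k v)
                     \<and> rnorm g (xs (i + int k)) (orbit_D F' xs i k v) \<le> C * \<gamma>\<^sub>2 ^ k * rnorm g (xs i) v)
   \<and> (\<forall>i k. \<forall>v\<in>Eu i. \<mu> ^ k * rnorm g (xs i) v / C \<le> rnorm g (xs (i + int k)) (orbit_D F' xs i k v))"

end

theory Submission
  imports Defs
begin

text \<open>The estimates of a splitting at \<open>x\<^sub>0\<close> only involve the forward orbit of \<open>x\<^sub>0\<close>, which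
  \<open>x\<^sub>0\<close> determines. Comparing growth rates, the stable space of one such splitting meets the
  sum of the centre and unstable spaces of another only in 0, and likewise the unstable space
  meets the sum of the stable and centre spaces only in 0; counting dimensions, all splittings
  at a point have the same dimensions. The estimates are closed conditions, so a limit of
  splittings (along a subsequence on which the subspaces converge) is again a splitting, and the
  points carrying a splitting of given dimensions form a closed set. Finally, the points through
  which a full orbit passes form the connected set \<open>\<Inter>\<^sub>n f\<^sup>n(M)\<close>; it is covered by finitely
  many of these disjoint closed sets, hence by one.\<close>

lemma faster_exponential_unbounded:
  fixes a \<beta> m B :: real
  assumes "0 < a" "0 < \<beta>" "\<beta> < m"
  shows "\<exists>n. B * \<beta> ^ n < m ^ n * a"
proof -
  obtain n where n: "B / a < (m / \<beta>) ^ n"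
    using real_arch_pow[of "m / \<beta>" "B / a"] assms by auto
  then have "B * \<beta> ^ n < m ^ n * a"
    using assms by (simp add: power_divide field_simps)
  then show ?thesis ..
qed

lemma dim_sum_eq_if_Int_zero:
  fixes W X :: "'a::euclidean_space set"
  assumes "subspace W" "subspace X" "W \<inter> X = {0}"
  shows "dim {w + x |w x. w \<in> W \<and> x \<in> X} = dim W + dim X"
  using dim_sums_Int[OF assms(1,2)] assms(3) by simp

lemma dim_add_le_if_Int_zero:
  fixes W X T :: "'a::euclidean_space set"
  assumes "subspace T" "subspace W" "subspace X" "W \<subseteq> T" "X \<subseteq> T" "W \<inter> X = {0}"
  shows "dim W + dim X \<le> dim T"
proof -
  have "{w + x |w x. w \<in> W \<and> x \<in> X} \<subseteq> T"
    using assms(1,4,5) by (auto intro: subspace_add)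
  then have "dim {w + x |w x. w \<in> W \<and> x \<in> X} \<le> dim T"
    by (rule dim_subset)
  then show ?thesis
    using dim_sum_eq_if_Int_zero[OF assms(2,3,6)] by simp
qed

text \<open>\<open>p n v\<close> plays the role of \<open>\<parallel>Df\<^sup>n\<^sub>x v\<parallel>\<close> for \<open>v\<close> in the tangent space \<open>T\<close> at \<open>x\<close>.\<close>

locale forward_growth =
  fixes T :: "'a::euclidean_space set" and p :: "nat \<Rightarrow> 'a \<Rightarrow> real"
    and C \<nu> \<gamma>\<^sub>1 \<gamma>\<^sub>2 \<mu> :: real
  assumes subspace_T: "subspace T"
    and p_add_le: "\<And>n a b. a \<in> T \<Longrightarrow> b \<in> T \<Longrightarrow> p n (a + b) \<le> p n a + p n b"
    and p_minus: "\<And>n a. a \<in> T \<Longrightarrow> p n (- a) = p n a"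
    and p_nonneg: "\<And>n a. a \<in> T \<Longrightarrow> 0 \<le> p n a"
    and p0_pos: "\<And>a. a \<in> T \<Longrightarrow> a \<noteq> 0 \<Longrightarrow> 0 < p 0 a"
    and rates: "0 < \<nu>" "\<nu> < \<gamma>\<^sub>1" "\<gamma>\<^sub>1 \<le> \<gamma>\<^sub>2" "\<gamma>\<^sub>2 < \<mu>" "0 < C"
begin

definition contracting :: "'a \<Rightarrow> bool" where
  "contracting v \<longleftrightarrow> (\<forall>n. p n v \<le> C * \<nu> ^ n * p 0 v)"

definition central :: "'a \<Rightarrow> bool" where
  "central v \<longleftrightarrow> (\<forall>n. \<gamma>\<^sub>1 ^ n / C * p 0 v \<le> p n v \<and> p n v \<le> C * \<gamma>\<^sub>2 ^ n * p 0 v)"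

definition expanding :: "'a \<Rightarrow> bool" where
  "expanding v \<longleftrightarrow> (\<forall>n. \<mu> ^ n / C * p 0 v \<le> p n v)"

definition slow :: "'a \<Rightarrow> bool" where
  "slow v \<longleftrightarrow> (\<exists>B. \<forall>n. p n v \<le> B * \<gamma>\<^sub>2 ^ n)"

definition admissible :: "'a set \<Rightarrow> 'a set \<Rightarrow> 'a set \<Rightarrow> bool" where
  "admissible Es Ec Eu \<longleftrightarrow> subspace Es \<and> subspace Ec \<and> subspace Eu \<and> Es \<subseteq> T \<and> Ec \<subseteq> T \<and> Eu \<subseteq> T
     \<and> (\<forall>v\<in>Es. contracting v) \<and> (\<forall>v\<in>Ec. central v) \<and> (\<forall>v\<in>Eu. expanding v)"

lemma eq_0_if_faster_lower_bound:
  assumes "w \<in> T" "0 < \<beta>" "\<beta> < m"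
    and upper: "\<And>n. p n w \<le> B * \<beta> ^ n" and lower: "\<And>n. m ^ n / C * p 0 w \<le> p n w"
  shows "w = 0"
proof (rule ccontr)
  assume "w \<noteq> 0"
  then have "0 < p 0 w / C"
    using p0_pos assms(1) rates by simp
  then obtain n where "B * \<beta> ^ n < m ^ n * (p 0 w / C)"
    using faster_exponential_unbounded assms(2,3) by blast
  with upper[of n] lower[of n] show False
    by simp
qed

lemma contracting_imp_slow:
  assumes "v \<in> T" "contracting v"
  shows "slow v"
  unfolding slow_def
proof (intro exI allI)
  fix n
  have "\<nu> ^ n * p 0 v \<le> \<gamma>\<^sub>2 ^ n * p 0 v"
    using rates p_nonneg[OF assms(1)] by (intro mult_right_mono power_mono) auto
  then have "C * \<nu> ^ n * p 0 v \<le> C * p 0 v * \<gamma>\<^sub>2 ^ n"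
    using rates by (simp add: mult_ac)
  then show "p n v \<le> C * p 0 v * \<gamma>\<^sub>2 ^ n"
    using assms(2) order.trans unfolding contracting_def by blast
qed

lemma central_imp_slow:
  assumes "central v"
  shows "slow v"
proof -
  have "p n v \<le> (C * p 0 v) * \<gamma>\<^sub>2 ^ n" for n
    using assms unfolding central_def by (simp add: mult_ac)
  then show ?thesis
    unfolding slow_def by blast
qed

lemma slow_add:
  assumes "a \<in> T" "b \<in> T" "slow a" "slow b"
  shows "slow (a + b)"
proof -
  obtain A B where A: "\<And>n. p n a \<le> A * \<gamma>\<^sub>2 ^ n" and B: "\<And>n. p n b \<le> B * \<gamma>\<^sub>2 ^ n"
    using assms(3,4) unfolding slow_def by blast
  have "p n (a + b) \<le> (A + B) * \<gamma>\<^sub>2 ^ n" for n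
  proof -
    have "p n (a + b) \<le> p n a + p n b"
      using p_add_le[OF assms(1,2)] .
    also have "\<dots> \<le> A * \<gamma>\<^sub>2 ^ n + B * \<gamma>\<^sub>2 ^ n"
      using A B by (rule add_mono)
    finally show ?thesis
      by (simp add: distrib_right)
  qed
  then show ?thesis
    unfolding slow_def by blast
qed

lemma slow_minus: "a \<in> T \<Longrightarrow> slow (- a) \<longleftrightarrow> slow a"
  unfolding slow_def by (simp add: p_minus)

lemma slow_expanding_eq_0:
  assumes "v \<in> T" "slow v" "expanding v"
  shows "v = 0"
proof -
  obtain B where "\<And>n. p n v \<le> B * \<gamma>\<^sub>2 ^ n"
    using assms(2) unfolding slow_def by blast
  then show ?thesis
    using eq_0_if_faster_lower_bound[OF assms(1), of \<gamma>\<^sub>2 \<mu> B] assms(3) rates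
    unfolding expanding_def by auto
qed

lemma contracting_central_eq_0:
  assumes "v \<in> T" "contracting v" "central v"
  shows "v = 0"
proof (rule eq_0_if_faster_lower_bound[OF assms(1)])
  fix n
  show "p n v \<le> C * p 0 v * \<nu> ^ n" "\<gamma>\<^sub>1 ^ n / C * p 0 v \<le> p n v"
    using assms(2,3) unfolding contracting_def central_def by (auto simp: mult_ac)
qed (use rates in auto)

lemma admissible_subspaces:
  assumes "admissible Es Ec Eu"
  shows "subspace Es" "subspace Ec" "subspace Eu" "Es \<subseteq> T" "Ec \<subseteq> T" "Eu \<subseteq> T"
  using assms unfolding admissible_def by auto

lemma admissible_Int_zero:
  assumes "admissible Es Ec Eu"
  shows "Es \<inter> Ec = {0}" "Ec \<inter> Eu = {0}"
proof -
  note s = admissible_subspaces[OF assms]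
  have "v = 0" if "v \<in> Es" "v \<in> Ec" for v
    using contracting_central_eq_0 that assms s(4) unfolding admissible_def by blast
  then show "Es \<inter> Ec = {0}"
    using s(1,2) subspace_0 by blast
  have "v = 0" if "v \<in> Ec" "v \<in> Eu" for v
    using slow_expanding_eq_0 central_imp_slow that assms s(5) unfolding admissible_def by blast
  then show "Ec \<inter> Eu = {0}"
    using s(2,3) subspace_0 by blast
qed

lemma admissible_slow:
  assumes "admissible Es Ec Eu"
  shows "\<And>a. a \<in> Es \<Longrightarrow> slow a" "\<And>b. b \<in> Ec \<Longrightarrow> slow b"
  using assms contracting_imp_slow central_imp_slow unfolding admissible_def by blast+

text \<open>Removing the centre component leaves a vector that is slow and expanding, hence zero.\<close>

lemma admissible_Int_centre_unstable_sum:
  assumes E: "admissible Es Ec Eu" and L: "admissible Ls Lc Lu"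
  shows "Ls \<inter> {b + c |b c. b \<in> Ec \<and> c \<in> Eu} = {0}"
proof -
  note sE = admissible_subspaces[OF E] and sL = admissible_subspaces[OF L]
  have "v = 0" if v: "v \<in> Ls" and b: "b \<in> Ec" and c: "c \<in> Eu" and vbc: "v = b + c" for v b c
  proof -
    have T: "v \<in> T" "- b \<in> T" "c \<in> T"
      using v b c sE sL subspace_neg[OF subspace_T] by auto
    have "slow (v + - b)"
      using slow_add[OF T(1,2)] admissible_slow(1)[OF L v] admissible_slow(2)[OF E b]
        slow_minus[of b] sE(5) b by auto
    moreover have "v + - b = c"
      using vbc by simp
    ultimately have "c = 0"
      using c E T(3) slow_expanding_eq_0 unfolding admissible_def by auto
    then show "v = 0"
      using contracting_central_eq_0 v b vbc T(1) L E unfolding admissible_def by auto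
  qed
  moreover have "0 \<in> Ls" "0 \<in> Ec" "0 \<in> Eu"
    using sL(1) sE(2,3) by (simp_all add: subspace_0)
  ultimately show ?thesis
    by force
qed

lemma admissible_Int_stable_centre_sum:
  assumes E: "admissible Es Ec Eu" and L: "admissible Ls Lc Lu"
  shows "Lu \<inter> {a + b |a b. a \<in> Es \<and> b \<in> Ec} = {0}"
proof -
  note sE = admissible_subspaces[OF E] and sL = admissible_subspaces[OF L]
  have "v = 0" if v: "v \<in> Lu" and a: "a \<in> Es" and b: "b \<in> Ec" and vab: "v = a + b" for v a b
  proof -
    have "slow (a + b)"
      using a b sE admissible_slow[OF E] slow_add by blast
    then show "v = 0"
      using slow_expanding_eq_0 v vab L sL unfolding admissible_def by blast
  qed
  moreover have "0 \<in> Lu" "0 \<in> Es" "0 \<in> Ec"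
    using sL(3) sE(1,2) by (simp_all add: subspace_0)
  ultimately show ?thesis
    by force
qed

lemma admissible_dim_le:
  assumes E: "admissible Es Ec Eu" "dim Es + dim Ec + dim Eu = dim T" and L: "admissible Ls Lc Lu"
  shows "dim Ls \<le> dim Es" "dim Lu \<le> dim Eu"
proof -
  note sE = admissible_subspaces[OF E(1)] and sL = admissible_subspaces[OF L]
  note disj = admissible_Int_zero[OF E(1)]
  have sum_in_T: "{x + y |x y. x \<in> X \<and> y \<in> Y} \<subseteq> T" if "X \<subseteq> T" "Y \<subseteq> T" for X Y
    using that subspace_T by (auto intro: subspace_add)
  have "dim Ls + dim {b + c |b c. b \<in> Ec \<and> c \<in> Eu} \<le> dim T"
    using sE sL admissible_Int_centre_unstable_sum[OF E(1) L] sum_in_T subspace_T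
    by (intro dim_add_le_if_Int_zero) (auto intro: subspace_sums)
  then show "dim Ls \<le> dim Es"
    using dim_sum_eq_if_Int_zero[OF sE(2,3) disj(2)] E(2) by linarith
  have "dim Lu + dim {a + b |a b. a \<in> Es \<and> b \<in> Ec} \<le> dim T"
    using sE sL admissible_Int_stable_centre_sum[OF E(1) L] sum_in_T subspace_T
    by (intro dim_add_le_if_Int_zero) (auto intro: subspace_sums)
  then show "dim Lu \<le> dim Eu"
    using dim_sum_eq_if_Int_zero[OF sE(1,2) disj(1)] E(2) by linarith
qed

lemma admissible_dims_unique:
  assumes "admissible Es Ec Eu" "dim Es + dim Ec + dim Eu = dim T"
    and "admissible Ls Lc Lu" "dim Ls + dim Lc + dim Lu = dim T"
  shows "dim Ls = dim Es \<and> dim Lc = dim Ec \<and> dim Lu = dim Eu"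
  using admissible_dim_le[OF assms(1-3)] admissible_dim_le[OF assms(3,4,1)] assms(2,4) by linarith

end

lemma tangent_space_scaleR:
  assumes "v \<in> tangent_space M x"
  shows "c *\<^sub>R v \<in> tangent_space M x"
proof -
  obtain \<gamma> where \<gamma>: "\<gamma> 0 = x" "\<forall>t. \<gamma> t \<in> M" "(\<gamma> has_vector_derivative v) (at 0)"
    using assms unfolding tangent_space_def by auto
  have c: "((\<lambda>t. c * t) has_vector_derivative c) (at 0)"
    by (auto intro!: derivative_eq_intros simp: has_real_derivative_iff_has_vector_derivative[symmetric])
  have "((\<gamma> \<circ> (\<lambda>t. c * t)) has_vector_derivative (c *\<^sub>R v)) (at 0)"
    using vector_diff_chain_at[OF c] \<gamma>(3) by simp
  then show ?thesis
    unfolding tangent_space_def using \<gamma> by (auto intro!: exI[of _ "\<gamma> \<circ> (\<lambda>t. c * t)"])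
qed

text \<open>A component orthogonal to L of the velocity would be the derivative of a function
  vanishing near 0.\<close>

lemma vector_derivative_in_subspace:
  fixes c :: "real \<Rightarrow> 'a::euclidean_space"
  assumes L: "subspace L" and "r > 0" and inL: "\<And>t. t \<in> ball 0 r \<Longrightarrow> c t \<in> L"
    and D: "(c has_vector_derivative D) (at 0)"
  shows "D \<in> L"
proof -
  obtain y z where y: "y \<in> span L" and z: "\<And>w. w \<in> span L \<Longrightarrow> orthogonal z w" and Dyz: "D = y + z"
    using orthogonal_subspace_decomp_exists by blast
  have "((\<lambda>t. z \<bullet> c t) has_derivative (\<lambda>h. z \<bullet> (h *\<^sub>R D))) (at 0)"
    using D unfolding has_vector_derivative_def by (auto intro!: derivative_eq_intros)
  then have "((\<lambda>t. 0::real) has_derivative (\<lambda>h. z \<bullet> (h *\<^sub>R D))) (at 0)"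
  proof (rule has_derivative_transform_within_open[OF _ open_ball])
    show "0 \<in> ball (0::real) r"
      using \<open>r > 0\<close> by simp
    show "z \<bullet> c t = 0" if "t \<in> ball 0 r" for t
      using z[OF span_base[OF inL[OF that]]] by (simp add: orthogonal_def)
  qed
  then have "(\<lambda>h. z \<bullet> (h *\<^sub>R D)) = (\<lambda>h. 0)"
    using has_derivative_unique has_derivative_const by blast
  then have "z \<bullet> D = 0"
    by (metis scaleR_one)
  moreover have "z \<bullet> y = 0"
    using z[OF y] by (simp add: orthogonal_def)
  ultimately have "z = 0"
    using Dyz by (simp add: inner_add_right)
  then have "D = y"
    using Dyz by simp
  moreover have "span L = L"
    using L by (simp add: span_eq_iff)
  ultimately show ?thesis
    using y by blast
qed

lemma bounded_arctan_line:
  fixes z w :: "'a::real_normed_vector"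
  assumes "e > 0"
  obtains \<epsilon> where "\<epsilon> > 0" "\<And>t. dist z (z + (\<epsilon> * arctan t) *\<^sub>R w) < e"
proof
  define \<epsilon> where "\<epsilon> = e / (2 * norm w + 2)"
  have "2 * norm w + 2 > 0"
    using norm_ge_zero[of w] by linarith
  then show "\<epsilon> > 0"
    using assms unfolding \<epsilon>_def by simp
  fix t
  have "\<bar>arctan t\<bar> \<le> 2"
    using arctan_bounded[of t] pi_less_4 by (auto simp: abs_le_iff)
  then have "\<epsilon> * \<bar>arctan t\<bar> * norm w \<le> \<epsilon> * 2 * norm w"
    using \<open>\<epsilon> > 0\<close> by (simp add: mult_right_mono)
  also have "\<dots> < \<epsilon> * (2 * norm w + 2)"
    using \<open>\<epsilon> > 0\<close> by simp
  also have "\<dots> = e"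
    unfolding \<epsilon>_def using \<open>2 * norm w + 2 > 0\<close> by simp
  finally show "dist z (z + (\<epsilon> * arctan t) *\<^sub>R w) < e"
    using \<open>\<epsilon> > 0\<close> by (simp add: dist_norm abs_mult)
qed

locale submanifold_chart =
  fixes M :: "'a::euclidean_space set" and U V L :: "'a set" and \<phi> \<psi> :: "'a \<Rightarrow> 'a"
    and \<phi>' \<psi>' :: "'a \<Rightarrow> 'a \<Rightarrow>\<^sub>L 'a"
  assumes open_U: "open U" and open_V: "open V" and subspace_L: "subspace L"
    and image_U: "\<phi> ` U = V"
    and \<psi>_\<phi>: "\<And>y. y \<in> U \<Longrightarrow> \<psi> (\<phi> y) = y" and \<phi>_\<psi>: "\<And>z. z \<in> V \<Longrightarrow> \<phi> (\<psi> z) = z"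
    and \<phi>_deriv: "\<And>y. y \<in> U \<Longrightarrow> (\<phi> has_derivative blinfun_apply (\<phi>' y)) (at y)"
    and \<psi>_deriv: "\<And>z. z \<in> V \<Longrightarrow> (\<psi> has_derivative blinfun_apply (\<psi>' z)) (at z)"
    and \<phi>'_cont: "continuous_on U \<phi>'"
    and flattens: "\<phi> ` (M \<inter> U) = V \<inter> L"
begin

lemma \<psi>_in_U: "z \<in> V \<Longrightarrow> \<psi> z \<in> U"
  using image_U \<psi>_\<phi> by auto

lemma \<psi>'_\<phi>':
  assumes "y \<in> U"
  shows "\<psi>' (\<phi> y) (\<phi>' y v) = v"
proof -
  have "\<phi> y \<in> V"
    using image_U assms by auto
  have "((\<psi> \<circ> \<phi>) has_derivative (\<psi>' (\<phi> y) \<circ> \<phi>' y)) (at y)"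
    using diff_chain_at[OF \<phi>_deriv[OF assms] \<psi>_deriv[OF \<open>\<phi> y \<in> V\<close>]] .
  moreover have "((\<psi> \<circ> \<phi>) has_derivative id) (at y)"
    by (rule has_derivative_transform_within_open[OF has_derivative_id open_U assms]) (simp add: \<psi>_\<phi>)
  ultimately have "\<psi>' (\<phi> y) \<circ> \<phi>' y = id"
    by (rule has_derivative_unique)
  then show ?thesis
    by (simp add: fun_eq_iff)
qed

lemma \<phi>'_\<psi>':
  assumes "z \<in> V"
  shows "\<phi>' (\<psi> z) (\<psi>' z w) = w"
proof -
  have "((\<phi> \<circ> \<psi>) has_derivative (\<phi>' (\<psi> z) \<circ> \<psi>' z)) (at z)"
    using diff_chain_at[OF \<psi>_deriv[OF assms] \<phi>_deriv[OF \<psi>_in_U[OF assms]]] .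
  moreover have "((\<phi> \<circ> \<psi>) has_derivative id) (at z)"
    by (rule has_derivative_transform_within_open[OF has_derivative_id open_V assms]) (simp add: \<phi>_\<psi>)
  ultimately have "\<phi>' (\<psi> z) \<circ> \<psi>' z = id"
    by (rule has_derivative_unique)
  then show ?thesis
    by (simp add: fun_eq_iff)
qed

lemma \<phi>'_tangent_space:
  assumes y: "y \<in> M" "y \<in> U" and v: "v \<in> tangent_space M y"
  shows "\<phi>' y v \<in> L"
proof -
  obtain \<gamma> where \<gamma>: "\<gamma> 0 = y" "\<forall>t. \<gamma> t \<in> M" "(\<gamma> has_vector_derivative v) (at 0)"
    using v unfolding tangent_space_def by auto
  obtain e where e: "e > 0" "ball y e \<subseteq> U"
    using open_U y(2) open_contains_ball by blast
  obtain r where r: "r > 0" "\<gamma> ` ball 0 r \<subseteq> ball y e"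
    using has_vector_derivative_continuous[OF \<gamma>(3)] e(1) \<gamma>(1) unfolding continuous_at_ball by blast
  have "((\<phi> \<circ> \<gamma>) has_vector_derivative \<phi>' y v) (at 0)"
    using diff_chain_at[of \<gamma> "\<lambda>t. t *\<^sub>R v" 0 \<phi> "\<phi>' y"] \<gamma> \<phi>_deriv[OF y(2)]
    unfolding has_vector_derivative_def by (simp add: o_def blinfun.scaleR_right)
  moreover have "(\<phi> \<circ> \<gamma>) t \<in> L" if "t \<in> ball 0 r" for t
  proof -
    have "\<gamma> t \<in> M \<inter> U"
      using that r e \<gamma>(2) by blast
    then show ?thesis
      using flattens by auto
  qed
  ultimately show ?thesis
    using vector_derivative_in_subspace[OF subspace_L r(1)] by blast
qed

lemma \<psi>'_in_tangent_space:
  assumes y: "y \<in> M" "y \<in> U" and w: "w \<in> L"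
  shows "\<psi>' (\<phi> y) w \<in> tangent_space M y"
proof -
  define z where "z = \<phi> y"
  have z: "z \<in> V" "z \<in> L"
    using image_U flattens y unfolding z_def by auto
  obtain e where e: "e > 0" "ball z e \<subseteq> V"
    using open_V z open_contains_ball by blast
  obtain \<epsilon> where \<epsilon>: "\<epsilon> > 0" "\<And>t. dist z (z + (\<epsilon> * arctan t) *\<^sub>R w) < e"
    using bounded_arctan_line[OF e(1)] by blast
  define c where "c t = z + (\<epsilon> * arctan t) *\<^sub>R w" for t
  have c_M: "\<psi> (c t) \<in> M" for t
  proof -
    have "c t \<in> V"
      using \<epsilon>(2) e(2) unfolding c_def by auto
    moreover have "c t \<in> L"
      unfolding c_def using subspace_L z(2) w by (simp add: subspace_add subspace_scale)
    ultimately have "c t \<in> \<phi> ` (M \<inter> U)"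
      using flattens by auto
    then obtain u where "u \<in> M \<inter> U" "c t = \<phi> u"
      by auto
    then show ?thesis
      using \<psi>_\<phi> by auto
  qed
  have "((\<lambda>t. \<epsilon> * arctan t) has_real_derivative \<epsilon>) (at 0)"
    using DERIV_cmult[OF DERIV_arctan[of 0], of \<epsilon>] by simp
  then have c_deriv: "(c has_vector_derivative \<epsilon> *\<^sub>R w) (at 0)"
    unfolding c_def using has_vector_derivative_add[OF has_vector_derivative_const[of z]
      has_vector_derivative_scaleR[OF _ has_vector_derivative_const[of w]]] by simp
  have "c 0 = z"
    unfolding c_def by simp
  then have "((\<psi> \<circ> c) has_vector_derivative \<psi>' z (\<epsilon> *\<^sub>R w)) (at 0)"
    using diff_chain_at[OF c_deriv[unfolded has_vector_derivative_def], of \<psi> "\<psi>' z"] \<psi>_deriv[OF z(1)]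
    unfolding has_vector_derivative_def by (simp add: o_def blinfun.scaleR_right)
  moreover have "(\<psi> \<circ> c) 0 = y"
    using \<open>c 0 = z\<close> \<psi>_\<phi> y unfolding z_def by simp
  ultimately have "\<psi>' z (\<epsilon> *\<^sub>R w) \<in> tangent_space M y"
    unfolding tangent_space_def using c_M by (auto intro!: exI[of _ "\<psi> \<circ> c"])
  then have "(1 / \<epsilon>) *\<^sub>R \<psi>' z (\<epsilon> *\<^sub>R w) \<in> tangent_space M y"
    by (rule tangent_space_scaleR)
  then show ?thesis
    using \<epsilon>(1) unfolding z_def by (simp add: blinfun.scaleR_right)
qed

lemma tangent_space_eq:
  assumes "y \<in> M" "y \<in> U"
  shows "tangent_space M y = blinfun_apply (\<psi>' (\<phi> y)) ` L"
proof
  show "blinfun_apply (\<psi>' (\<phi> y)) ` L \<subseteq> tangent_space M y"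
    using \<psi>'_in_tangent_space[OF assms] by auto
  show "tangent_space M y \<subseteq> blinfun_apply (\<psi>' (\<phi> y)) ` L"
  proof
    fix v
    assume "v \<in> tangent_space M y"
    then have "\<phi>' y v \<in> L"
      by (rule \<phi>'_tangent_space[OF assms])
    then show "v \<in> blinfun_apply (\<psi>' (\<phi> y)) ` L"
      using \<psi>'_\<phi>'[OF assms(2)] by (metis image_eqI)
  qed
qed

lemma subspace_tangent_space: "y \<in> M \<Longrightarrow> y \<in> U \<Longrightarrow> subspace (tangent_space M y)"
  using tangent_space_eq subspace_L by (simp add: linear_subspace_image bounded_linear.linear[OF blinfun.bounded_linear_right])

lemma dim_tangent_space:
  assumes "y \<in> M" "y \<in> U"
  shows "dim (tangent_space M y) = dim L"
proof -
  have "\<phi> y \<in> V"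
    using image_U assms by auto
  then have "inj (blinfun_apply (\<psi>' (\<phi> y)))"
    using \<phi>'_\<psi>' by (metis injI)
  then show ?thesis
    unfolding tangent_space_eq[OF assms]
    by (intro dim_image_eq bounded_linear.linear[OF blinfun.bounded_linear_right]) (auto intro: inj_on_subset)
qed

lemma tangent_space_limit:
  assumes x: "x \<in> M" "x \<in> U" and xs: "\<And>k. xs k \<in> M" "xs \<longlonglongrightarrow> x"
    and vs: "\<And>k. vs k \<in> tangent_space M (xs k)" "vs \<longlonglongrightarrow> v"
  shows "v \<in> tangent_space M x"
proof -
  have "isCont \<phi>' x"
    using \<phi>'_cont open_U x(2) continuous_on_eq_continuous_at by blast
  then have lim: "(\<lambda>k. \<phi>' (xs k) (vs k)) \<longlonglongrightarrow> \<phi>' x v"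
    using blinfun.tendsto[OF isCont_tendsto_compose[OF _ xs(2)] vs(2)] by blast
  have "eventually (\<lambda>k. xs k \<in> U) sequentially"
    using xs(2) open_U x(2) by (rule topological_tendstoD)
  then have "eventually (\<lambda>k. \<phi>' (xs k) (vs k) \<in> L) sequentially"
    by eventually_elim (use \<phi>'_tangent_space xs(1) vs(1) in blast)
  then have "\<phi>' x v \<in> L"
    using Lim_in_closed_set[OF closed_subspace[OF subspace_L] _ trivial_limit_sequentially lim] by blast
  then show ?thesis
    using \<psi>'_in_tangent_space[OF x] \<psi>'_\<phi>'[OF x(2)] by metis
qed

end

lemma C1_submanifold_chart:
  assumes "C1_submanifold M d" "x \<in> M"
  obtains U V L \<phi> \<psi> \<phi>' \<psi>' where "submanifold_chart M U V L \<phi> \<psi> \<phi>' \<psi>'" "x \<in> U" "dim L = d"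
proof -
  obtain U V L and \<phi> \<psi> :: "'a \<Rightarrow> 'a"
    where c: "open U" "x \<in> U" "open V" "subspace L" "dim L = d"
      "\<phi> ` U = V" "\<forall>y\<in>U. \<psi> (\<phi> y) = y" "\<forall>z\<in>V. \<phi> (\<psi> z) = z"
      "C1_on \<phi> U" "C1_on \<psi> V" "\<phi> ` (M \<inter> U) = V \<inter> L"
    using bspec[OF assms(1)[unfolded C1_submanifold_def] assms(2)] by (elim exE conjE) (rule that; assumption)
  obtain \<phi>' where "\<forall>y\<in>U. (\<phi> has_derivative blinfun_apply (\<phi>' y)) (at y)" "continuous_on U \<phi>'"
    using c(9) unfolding C1_on_def by blast
  moreover obtain \<psi>' where "\<forall>y\<in>V. (\<psi> has_derivative blinfun_apply (\<psi>' y)) (at y)"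
    using c(10) unfolding C1_on_def by blast
  ultimately have "submanifold_chart M U V L \<phi> \<psi> \<phi>' \<psi>'"
    unfolding submanifold_chart_def using c(1,3,4,6-8,11) by blast
  then show ?thesis
    using that c(2,5) by blast
qed

lemma subspace_tangent_space:
  assumes "C1_submanifold M d" "x \<in> M"
  shows "subspace (tangent_space M x)"
proof -
  obtain U V L \<phi> \<psi> \<phi>' \<psi>' where "submanifold_chart M U V L \<phi> \<psi> \<phi>' \<psi>'" "x \<in> U"
    using C1_submanifold_chart[OF assms] .
  then show ?thesis
    using submanifold_chart.subspace_tangent_space assms(2) by blast
qed

lemma dim_tangent_space:
  assumes "C1_submanifold M d" "x \<in> M"
  shows "dim (tangent_space M x) = d"
proof -
  obtain U V L \<phi> \<psi> \<phi>' \<psi>' where "submanifold_chart M U V L \<phi> \<psi> \<phi>' \<psi>'" "x \<in> U" "dim L = d"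
    using C1_submanifold_chart[OF assms] .
  then show ?thesis
    using submanifold_chart.dim_tangent_space assms(2) by metis
qed

lemma tangent_space_limit:
  assumes "C1_submanifold M d" "x \<in> M" "\<And>k. xs k \<in> M" "xs \<longlonglongrightarrow> x"
    and "\<And>k. vs k \<in> tangent_space M (xs k)" "vs \<longlonglongrightarrow> v"
  shows "v \<in> tangent_space M x"
proof -
  obtain U V L \<phi> \<psi> \<phi>' \<psi>' where "submanifold_chart M U V L \<phi> \<psi> \<phi>' \<psi>'" "x \<in> U"
    using C1_submanifold_chart[OF assms(1,2)] .
  then show ?thesis
    using submanifold_chart.tangent_space_limit assms(2-) by blast
qed

locale positive_form =
  fixes q :: "'a::real_vector \<Rightarrow> 'a \<Rightarrow> real" and T :: "'a set"
  assumes symmetric: "\<And>v w. q v w = q w v" and linear_left: "\<And>w. linear (\<lambda>v. q v w)"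
    and subspace_T: "subspace T" and positive: "\<And>v. v \<in> T \<Longrightarrow> v \<noteq> 0 \<Longrightarrow> q v v > 0"
begin

lemma add_left: "q (a + b) w = q a w + q b w"
  using linear_add[OF linear_left] by blast

lemma add_right: "q w (a + b) = q w a + q w b"
  using add_left symmetric by metis

lemma scale_left: "q (c *\<^sub>R a) w = c * q a w"
  using linear_scale[OF linear_left] by simp

lemma scale_right: "q w (c *\<^sub>R a) = c * q w a"
  using scale_left symmetric by metis

lemma minus_minus: "q (- a) (- a) = q a a"
  using scale_left[of "-1"] scale_right[of _ "-1"] by simp

lemma nonneg: "v \<in> T \<Longrightarrow> 0 \<le> q v v"
  using positive[of v] scale_left[of 0 0 0] by (cases "v = 0") auto

lemma Cauchy_Schwarz_sq:
  assumes "a \<in> T" "b \<in> T"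
  shows "(q a b)\<^sup>2 \<le> q a a * q b b"
proof -
  have quadratic: "0 \<le> q a a + 2 * t * q a b + t\<^sup>2 * q b b" for t
  proof -
    have "0 \<le> q (a + t *\<^sub>R b) (a + t *\<^sub>R b)"
      using assms subspace_T by (intro nonneg) (simp add: subspace_add subspace_scale)
    also have "\<dots> = q a a + 2 * t * q a b + t\<^sup>2 * q b b"
      by (simp add: add_left add_right scale_left scale_right symmetric[of b a]
          power2_eq_square algebra_simps)
    finally show ?thesis .
  qed
  show ?thesis
  proof (cases "q b b = 0")
    case True
    have "q a b = 0"
    proof (rule ccontr)
      assume "q a b \<noteq> 0"
      then have "q a a + 2 * (- (q a a + 1) / (2 * q a b)) * q a b = -1"
        by (simp add: field_simps)
      then show False
        using quadratic[of "- (q a a + 1) / (2 * q a b)"] True by simp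
    qed
    then show ?thesis
      using True by simp
  next
    case False
    then have pos: "q b b > 0"
      using nonneg[OF assms(2)] by simp
    have "0 \<le> q a a + 2 * (- q a b / q b b) * q a b + (- q a b / q b b)\<^sup>2 * q b b"
      by (rule quadratic)
    also have "\<dots> = q a a - (q a b)\<^sup>2 / q b b"
      using pos by (simp add: field_simps power2_eq_square)
    finally show ?thesis
      using pos by (simp add: divide_le_eq mult.commute)
  qed
qed

lemma sqrt_add_le:
  assumes "a \<in> T" "b \<in> T"
  shows "sqrt (q (a + b) (a + b)) \<le> sqrt (q a a) + sqrt (q b b)"
proof -
  have A: "0 \<le> q a a" and B: "0 \<le> q b b"
    using nonneg assms by auto
  have "q a b \<le> sqrt (q a a) * sqrt (q b b)"
    using real_sqrt_le_mono[OF Cauchy_Schwarz_sq[OF assms]] by (simp add: real_sqrt_mult)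
  then have "q (a + b) (a + b) \<le> (sqrt (q a a) + sqrt (q b b))\<^sup>2"
    using A B by (simp add: add_left add_right symmetric[of b a] power2_eq_square algebra_simps)
  then show ?thesis
    using A B real_sqrt_le_mono by fastforce
qed

end

lemma positive_form_riemannian_metric:
  assumes "riemannian_metric M g" "x \<in> M" "subspace (tangent_space M x)"
  shows "positive_form (g x) (tangent_space M x)"
  using assms unfolding riemannian_metric_def positive_form_def by blast

primrec deriv_iter :: "('a \<Rightarrow> 'a) \<Rightarrow> ('a::real_normed_vector \<Rightarrow> 'a \<Rightarrow>\<^sub>L 'a) \<Rightarrow> nat \<Rightarrow> 'a \<Rightarrow> 'a \<Rightarrow>\<^sub>L 'a" where
  "deriv_iter F F' 0 x = id_blinfun"
| "deriv_iter F F' (Suc n) x = F' ((F ^^ n) x) o\<^sub>L deriv_iter F F' n x"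

lemma orbit_funpow:
  assumes "xs \<in> orbits M F"
  shows "xs (j + int n) = (F ^^ n) (xs j)"
proof (induction n)
  case (Suc n)
  have "xs (j + int (Suc n)) = xs (j + int n + 1)"
    by (simp add: algebra_simps)
  also have "\<dots> = F (xs (j + int n))"
    using assms unfolding orbits_def by simp
  finally show ?case
    using Suc by simp
qed simp

lemma orbit_D_eq_deriv_iter:
  assumes "xs \<in> orbits M F"
  shows "orbit_D F' xs 0 n v = deriv_iter F F' n (xs 0) v"
  using orbit_funpow[OF assms, of 0] by (induction n) auto

lemma orthonormal_frame_exists:
  fixes S :: "'a::euclidean_space set"
  assumes "subspace S"
  shows "\<exists>b. (\<forall>i<dim S. b i \<in> S \<and> norm (b i) = 1) \<and> (\<forall>i<dim S. \<forall>j<dim S. i \<noteq> j \<longrightarrow> b i \<bullet> b j = 0)"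
proof -
  obtain B where B: "B \<subseteq> S" "pairwise orthogonal B" "\<And>x. x \<in> B \<Longrightarrow> norm x = 1"
    "independent B" "card B = dim S" "span B = S"
    using orthonormal_basis_subspace[OF assms] by blast
  obtain b where "bij_betw b {0..<card B} B"
    using ex_bij_betw_nat_finite[OF independent_imp_finite[OF B(4)]] by blast
  then have b: "bij_betw b {0..<dim S} B"
    using B(5) by simp
  have "b i \<in> S \<and> norm (b i) = 1" if "i < dim S" for i
    using bij_betwE[OF b] that B(1,3) by auto
  moreover have "b i \<bullet> b j = 0" if "i < dim S" "j < dim S" "i \<noteq> j" for i j
  proof -
    have "b i \<noteq> b j"
      using bij_betw_imp_inj_on[OF b] that unfolding inj_on_def by auto
    then show ?thesis
      using B(2) bij_betwE[OF b] that unfolding pairwise_def orthogonal_def by auto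
  qed
  ultimately show ?thesis
    by (intro exI[of _ b]) blast
qed

lemma inj_on_orthonormal_frame:
  fixes e :: "nat \<Rightarrow> 'a::euclidean_space"
  assumes norm: "\<And>i. i < m \<Longrightarrow> norm (e i) = 1"
    and orth: "\<And>i j. i < m \<Longrightarrow> j < m \<Longrightarrow> i \<noteq> j \<Longrightarrow> e i \<bullet> e j = 0"
  shows "inj_on e {..<m}"
proof (rule inj_onI)
  fix i j
  assume "i \<in> {..<m}" "j \<in> {..<m}" "e i = e j"
  then show "i = j"
    using orth[of i j] norm[of i] by (metis inner_eq_zero_iff lessThan_iff norm_zero zero_neq_one)
qed

lemma dim_span_orthonormal_frame:
  fixes e :: "nat \<Rightarrow> 'a::euclidean_space"
  assumes norm: "\<And>i. i < m \<Longrightarrow> norm (e i) = 1"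
    and orth: "\<And>i j. i < m \<Longrightarrow> j < m \<Longrightarrow> i \<noteq> j \<Longrightarrow> e i \<bullet> e j = 0"
  shows "dim (span (e ` {..<m})) = m"
proof -
  have "card (e ` {..<m}) = m"
    using card_image[OF inj_on_orthonormal_frame[OF assms]] by simp
  moreover have "independent (e ` {..<m})"
  proof (rule pairwise_orthogonal_independent)
    show "pairwise orthogonal (e ` {..<m})"
      using orth unfolding pairwise_def orthogonal_def by auto
    show "0 \<notin> e ` {..<m}"
      using norm by (metis imageE lessThan_iff norm_zero zero_neq_one)
  qed
  ultimately show ?thesis
    using dim_span_eq_card_independent by metis
qed

lemma frames_convergent_subseq:
  fixes b :: "nat \<Rightarrow> nat \<Rightarrow> 'a::euclidean_space"
  assumes "\<And>k i. i < m \<Longrightarrow> norm (b k i) = 1"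
  shows "\<exists>r e. strict_mono r \<and> (\<forall>i<m. (\<lambda>k. b (r k) i) \<longlonglongrightarrow> e i)"
  using assms
proof (induction m)
  case 0
  show ?case
    using strict_mono_id by auto
next
  case (Suc m)
  then have "\<exists>r e. strict_mono r \<and> (\<forall>i<m. (\<lambda>k. b (r k) i) \<longlonglongrightarrow> e i)"
    by simp
  then obtain r e where r: "strict_mono r" "\<forall>i<m. (\<lambda>k. b (r k) i) \<longlonglongrightarrow> e i"
    by blast
  have "\<forall>k. (\<lambda>k. b (r k) m) k \<in> sphere 0 1"
    using Suc.prems by simp
  then obtain l s where "l \<in> sphere 0 1" and s: "strict_mono s" "((\<lambda>k. b (r k) m) \<circ> s) \<longlonglongrightarrow> l"
    by (rule seq_compactE[OF compact_imp_seq_compact[OF compact_sphere]])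
  have "(\<lambda>k. b (r (s k)) i) \<longlonglongrightarrow> (e(m := l)) i" if "i < Suc m" for i
  proof (cases "i = m")
    case True
    then show ?thesis
      using s(2) by (simp add: o_def)
  next
    case False
    then have "i < m"
      using that by simp
    then have "((\<lambda>k. b (r k) i) \<circ> s) \<longlonglongrightarrow> e i"
      using r(2) LIMSEQ_subseq_LIMSEQ[OF _ s(1)] by blast
    then show ?thesis
      using False by (simp add: o_def)
  qed
  moreover have "strict_mono (r \<circ> s)"
    using strict_mono_o r(1) s(1) by blast
  ultimately show ?case
    unfolding o_def by blast
qed

lemma orthonormal_frames_convergent_subseq:
  fixes b :: "nat \<Rightarrow> nat \<Rightarrow> 'a::euclidean_space"
  assumes norm: "\<And>k i. i < m \<Longrightarrow> norm (b k i) = 1"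
    and orth: "\<And>k i j. i < m \<Longrightarrow> j < m \<Longrightarrow> i \<noteq> j \<Longrightarrow> b k i \<bullet> b k j = 0"
  obtains r e where "strict_mono r" "\<And>i. i < m \<Longrightarrow> (\<lambda>k. b (r k) i) \<longlonglongrightarrow> e i"
    "\<And>i. i < m \<Longrightarrow> norm (e i) = 1" "\<And>i j. i < m \<Longrightarrow> j < m \<Longrightarrow> i \<noteq> j \<Longrightarrow> e i \<bullet> e j = 0"
proof -
  obtain r e where r: "strict_mono r" "\<And>i. i < m \<Longrightarrow> (\<lambda>k. b (r k) i) \<longlonglongrightarrow> e i"
    using frames_convergent_subseq[of m b] norm by blast
  have "norm (e i) = 1" if "i < m" for i
  proof -
    have "(\<lambda>k. norm (b (r k) i)) \<longlonglongrightarrow> norm (e i)"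
      using r(2)[OF that] by (rule tendsto_norm)
    then show ?thesis
      using norm[OF that] LIMSEQ_unique[OF _ tendsto_const] by simp
  qed
  moreover have "e i \<bullet> e j = 0" if "i < m" "j < m" "i \<noteq> j" for i j
  proof -
    have "(\<lambda>k. b (r k) i \<bullet> b (r k) j) \<longlonglongrightarrow> e i \<bullet> e j"
      using r(2) that by (intro tendsto_inner) auto
    then show ?thesis
      using orth[OF that] LIMSEQ_unique[OF _ tendsto_const] by simp
  qed
  ultimately show ?thesis
    using that r by blast
qed

definition approximates :: "'a::topological_space set \<Rightarrow> (nat \<Rightarrow> 'a set) \<Rightarrow> bool" where
  "approximates L S \<longleftrightarrow> (\<forall>v\<in>L. \<exists>vs. (\<forall>k. vs k \<in> S k) \<and> vs \<longlonglongrightarrow> v)"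

lemma approximates_subseq:
  assumes "approximates L S" "strict_mono r"
  shows "approximates L (S \<circ> r)"
  unfolding approximates_def
proof
  fix v
  assume "v \<in> L"
  then obtain vs where "\<forall>k. vs k \<in> S k" "vs \<longlonglongrightarrow> v"
    using assms(1) unfolding approximates_def by blast
  then show "\<exists>vs. (\<forall>k. vs k \<in> (S \<circ> r) k) \<and> vs \<longlonglongrightarrow> v"
    using LIMSEQ_subseq_LIMSEQ[OF _ assms(2)] by (intro exI[of _ "vs \<circ> r"]) auto
qed

text \<open>The limit is the span of a limit of orthonormal frames of the \<open>S k\<close>.\<close>

lemma subspaces_approximate_subspace:
  fixes S :: "nat \<Rightarrow> 'a::euclidean_space set"
  assumes subspace: "\<And>k. subspace (S k)" and dim: "\<And>k. dim (S k) = m"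
  obtains r L where "strict_mono r" "subspace L" "dim L = m" "approximates L (S \<circ> r)"
proof -
  from choice[OF allI[OF orthonormal_frame_exists[OF subspace, unfolded dim]]]
  obtain b where b: "\<forall>k. (\<forall>i<m. b k i \<in> S k \<and> norm (b k i) = 1)
      \<and> (\<forall>i<m. \<forall>j<m. i \<noteq> j \<longrightarrow> b k i \<bullet> b k j = 0)" ..
  have b_norm: "\<And>k i. i < m \<Longrightarrow> norm (b k i) = 1"
    and b_orth: "\<And>k i j. i < m \<Longrightarrow> j < m \<Longrightarrow> i \<noteq> j \<Longrightarrow> b k i \<bullet> b k j = 0"
    using b by simp_all
  show ?thesis
  proof (rule orthonormal_frames_convergent_subseq[of m b, OF b_norm b_orth])
    fix r e
    assume r: "strict_mono r" "\<And>i. i < m \<Longrightarrow> (\<lambda>k. b (r k) i) \<longlonglongrightarrow> e i"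
      and e: "\<And>i. i < m \<Longrightarrow> norm (e i) = 1" "\<And>i j. i < m \<Longrightarrow> j < m \<Longrightarrow> i \<noteq> j \<Longrightarrow> e i \<bullet> e j = 0"
    have "approximates (span (e ` {..<m})) (S \<circ> r)"
      unfolding approximates_def
    proof
      fix v
      assume "v \<in> span (e ` {..<m})"
      then obtain u where "v = (\<Sum>x\<in>e ` {..<m}. u x *\<^sub>R x)"
        using span_finite[of "e ` {..<m}"] by auto
      then have "v = (\<Sum>i<m. u (e i) *\<^sub>R e i)"
        by (simp add: sum.reindex[OF inj_on_orthonormal_frame[where e = e and m = m, OF e]])
      moreover have "(\<Sum>i<m. u (e i) *\<^sub>R b (r k) i) \<in> S (r k)" for k
        using b by (intro subspace_sum[OF subspace] subspace_scale[OF subspace]) auto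
      moreover have "(\<lambda>k. \<Sum>i<m. u (e i) *\<^sub>R b (r k) i) \<longlonglongrightarrow> (\<Sum>i<m. u (e i) *\<^sub>R e i)"
        by (intro tendsto_sum tendsto_scaleR tendsto_const r(2)) auto
      ultimately show "\<exists>vs. (\<forall>k. vs k \<in> (S \<circ> r) k) \<and> vs \<longlonglongrightarrow> v"
        by (intro exI[of _ "\<lambda>k. \<Sum>i<m. u (e i) *\<^sub>R b (r k) i"]) simp
    qed
    then show ?thesis
      using that[OF r(1) subspace_span dim_span_orthonormal_frame[where e = e and m = m, OF e]] by blast
  qed
qed

definition eventual_image :: "('a \<Rightarrow> 'a) \<Rightarrow> 'a set \<Rightarrow> 'a set" where
  "eventual_image F M = (\<Inter>n. (F ^^ n) ` M)"

lemma funpow_image_subset: "F ` M \<subseteq> M \<Longrightarrow> (F ^^ n) ` M \<subseteq> M"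
  by (induction n) (auto simp: image_subset_iff)

lemma funpow_image_antimono:
  assumes "F ` M \<subseteq> M" "m \<le> n"
  shows "(F ^^ n) ` M \<subseteq> (F ^^ m) ` M"
proof -
  obtain j where "n = m + j"
    using le_Suc_ex[OF assms(2)] by blast
  then have "(F ^^ n) ` M = (F ^^ m) ` (F ^^ j) ` M"
    by (simp add: funpow_add image_comp)
  also have "\<dots> \<subseteq> (F ^^ m) ` M"
    using funpow_image_subset[OF assms(1)] by blast
  finally show ?thesis .
qed

lemma continuous_on_funpow:
  assumes "continuous_on M F" "F ` M \<subseteq> M"
  shows "continuous_on M (F ^^ n)"
proof (induction n)
  case (Suc n)
  then show ?case
    using continuous_on_compose2[OF assms(1) Suc funpow_image_subset[OF assms(2)]] by simp
qed (simp add: continuous_on_id)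

lemma eventual_image_subset: "eventual_image F M \<subseteq> M"
  unfolding eventual_image_def using INT_lower[of 0 UNIV "\<lambda>n. (F ^^ n) ` M"] by simp

lemma orbit_in_eventual_image:
  assumes "xs \<in> orbits M F"
  shows "xs j \<in> eventual_image F M"
proof -
  have "xs j = (F ^^ n) (xs (j - int n))" for n
    using orbit_funpow[OF assms, of "j - int n" n] by simp
  moreover have "xs (j - int n) \<in> M" for n
    using assms unfolding orbits_def by blast
  ultimately show ?thesis
    unfolding eventual_image_def by blast
qed

lemma two_sided_orbit:
  assumes into: "F ` M \<subseteq> M" and "A \<subseteq> M" "x \<in> A"
    and pre: "\<forall>y\<in>A. pre y \<in> A \<and> F (pre y) = y"
  shows "(\<lambda>i. if 0 \<le> i then (F ^^ nat i) x else (pre ^^ nat (- i)) x) \<in> orbits M F"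
    (is "?xs \<in> _")
proof -
  have pre_in: "(pre ^^ k) x \<in> A" for k
    by (induction k) (use assms(3) pre in auto)
  have "F (?xs i) = ?xs (i + 1)" for i
  proof (cases "0 \<le> i")
    case True
    then have "nat (i + 1) = Suc (nat i)"
      by simp
    then show ?thesis
      using True by simp
  next
    case False
    then have "nat (- i) = Suc (nat (- (i + 1)))"
      by simp
    then have "?xs i = pre ((pre ^^ nat (- (i + 1))) x)"
      using False by (simp add: funpow_swap1)
    then have "F (?xs i) = (pre ^^ nat (- (i + 1))) x"
      using pre pre_in by simp
    also have "\<dots> = ?xs (i + 1)"
      using False by simp
    finally show ?thesis .
  qed
  moreover have "?xs i \<in> M" for i
  proof -
    have "x \<in> M"
      by (rule subsetD[OF assms(2,3)])
    then have "(F ^^ nat i) x \<in> (F ^^ nat i) ` M"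
      by (rule imageI)
    then have "(F ^^ nat i) x \<in> M"
      by (rule subsetD[OF funpow_image_subset[OF into]])
    moreover have "(pre ^^ nat (- i)) x \<in> M"
      by (rule subsetD[OF assms(2) pre_in])
    ultimately show ?thesis
      by simp
  qed
  ultimately show ?thesis
    unfolding orbits_def by blast
qed

context
  fixes M :: "'a::euclidean_space set" and F :: "'a \<Rightarrow> 'a"
  assumes compact: "compact M" and continuous: "continuous_on M F" and into: "F ` M \<subseteq> M"
begin

lemma compact_funpow_image: "compact ((F ^^ n) ` M)"
  using compact_continuous_image[OF continuous_on_funpow[OF continuous into] compact] .

lemma connected_eventual_image:
  assumes "connected M"
  shows "connected (eventual_image F M)"
  unfolding eventual_image_def
proof (rule connected_nest)
  show "compact ((F ^^ n) ` M)" for n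
    by (rule compact_funpow_image)
  show "connected ((F ^^ n) ` M)" for n
    using connected_continuous_image[OF continuous_on_funpow[OF continuous into] assms] .
  show "(F ^^ n) ` M \<subseteq> (F ^^ m) ` M" if "m \<le> n" for m n
    using funpow_image_antimono[OF into that] .
qed

text \<open>A preimage of \<open>y\<close> in the eventual image is found in the nested compact sets of
  preimages of \<open>y\<close> in \<open>(F ^^ n) ` M\<close>.\<close>

lemma eventual_image_preimage:
  assumes "y \<in> eventual_image F M"
  shows "\<exists>z\<in>eventual_image F M. F z = y"
proof -
  define K where "K n = {z \<in> (F ^^ n) ` M. F z = y}" for n
  have "compact (K n)" for n
  proof -
    have "continuous_on ((F ^^ n) ` M) F"
      using continuous_on_subset[OF continuous funpow_image_subset[OF into]] .
    then have "closed (K n)"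
      unfolding K_def by (rule continuous_closed_preimage_constant[OF _ compact_imp_closed[OF compact_funpow_image]])
    moreover have "K n \<subseteq> (F ^^ n) ` M"
      unfolding K_def by blast
    ultimately show ?thesis
      using compact_Int_closed[OF compact_funpow_image, of "K n" n] by (simp add: Int_absorb1)
  qed
  moreover have "K n \<noteq> {}" for n
  proof -
    obtain m where "m \<in> M" "y = (F ^^ Suc n) m"
      using assms unfolding eventual_image_def by blast
    then have "(F ^^ n) m \<in> K n"
      unfolding K_def by simp
    then show ?thesis
      by blast
  qed
  moreover have "K n \<subseteq> K m" if "m \<le> n" for m n
    unfolding K_def using funpow_image_antimono[OF into that] by blast
  ultimately have "\<Inter> (range K) \<noteq> {}"
    by (rule compact_nest)
  then obtain z where "z \<in> \<Inter> (range K)"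
    by blast
  then have "z \<in> eventual_image F M" "F z = y"
    unfolding K_def eventual_image_def by auto
  then show ?thesis
    by blast
qed

lemma eventual_image_orbit:
  assumes x: "x \<in> eventual_image F M"
  shows "\<exists>xs\<in>orbits M F. xs 0 = x"
proof -
  have "\<forall>y\<in>eventual_image F M. \<exists>z. z \<in> eventual_image F M \<and> F z = y"
    using eventual_image_preimage by blast
  then obtain pre where "\<forall>y\<in>eventual_image F M. pre y \<in> eventual_image F M \<and> F (pre y) = y"
    by (rule bchoice[THEN exE])
  then have "(\<lambda>i. if 0 \<le> i then (F ^^ nat i) x else (pre ^^ nat (- i)) x) \<in> orbits M F"
    by (rule two_sided_orbit[OF into eventual_image_subset x])
  then show ?thesis
    by (rule bexI[rotated]) simp
qed

end

lemma connected_disjoint_closed_cover_unique: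
  assumes "connected S" "finite I" "\<And>i. i \<in> I \<Longrightarrow> closed (E i)" "S \<subseteq> (\<Union>i\<in>I. E i)"
    and "disjoint_family_on E I" "i \<in> I" "j \<in> I" "x \<in> S \<inter> E i" "y \<in> S \<inter> E j"
  shows "i = j"
proof (rule ccontr)
  assume "i \<noteq> j"
  have "closed (\<Union>k\<in>I - {i}. E k)"
    using assms(2,3) by (intro closed_UN) auto
  moreover have "S \<subseteq> E i \<union> (\<Union>k\<in>I - {i}. E k)"
    using assms(4) by blast
  moreover have "E i \<inter> (\<Union>k\<in>I - {i}. E k) \<inter> S = {}"
    using assms(5,6) unfolding disjoint_family_on_def by blast
  ultimately have "E i \<inter> S = {} \<or> (\<Union>k\<in>I - {i}. E k) \<inter> S = {}"
    using connected_closedD[OF assms(1)] assms(3,6) by blast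
  then show False
    using assms(7-9) \<open>i \<noteq> j\<close> by blast
qed

lemma subset_sum3:
  fixes A B C :: "'a::monoid_add set"
  assumes "0 \<in> A" "0 \<in> B" "0 \<in> C"
  shows "A \<union> B \<union> C \<subseteq> {a + b + c |a b c. a \<in> A \<and> b \<in> B \<and> c \<in> C}"
proof -
  have "a + 0 + 0 \<in> {a + b + c |a b c. a \<in> A \<and> b \<in> B \<and> c \<in> C}" if "a \<in> A" for a
    using that assms by blast
  moreover have "0 + b + 0 \<in> {a + b + c |a b c. a \<in> A \<and> b \<in> B \<and> c \<in> C}" if "b \<in> B" for b
    using that assms by blast
  moreover have "0 + 0 + c \<in> {a + b + c |a b c. a \<in> A \<and> b \<in> B \<and> c \<in> C}" if "c \<in> C" for c
    using that assms by blast
  ultimately show ?thesis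
    by auto
qed

locale ph_setting =
  fixes M :: "'a::euclidean_space set" and F :: "'a \<Rightarrow> 'a" and F' :: "'a \<Rightarrow> 'a \<Rightarrow>\<^sub>L 'a"
    and g :: "'a \<Rightarrow> 'a \<Rightarrow> 'a \<Rightarrow> real" and \<nu> \<gamma>\<^sub>1 \<gamma>\<^sub>2 \<mu> C :: real
  assumes closed_manifold: "closed_manifold M"
    and local_diffeo: "C1_local_diffeo M F F'"
    and metric: "riemannian_metric M g"
    and rates: "0 < \<nu>" "\<nu> < \<gamma>\<^sub>1" "\<gamma>\<^sub>1 \<le> \<gamma>\<^sub>2" "\<gamma>\<^sub>2 < \<mu>" "0 < C"
begin

lemma ex_C1_submanifold: "\<exists>d. C1_submanifold M d"
  using closed_manifold unfolding closed_manifold_def by blast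

lemma subspace_tangent: "x \<in> M \<Longrightarrow> subspace (tangent_space M x)"
  using ex_C1_submanifold subspace_tangent_space by blast

lemma dim_tangent_eq: "x \<in> M \<Longrightarrow> y \<in> M \<Longrightarrow> dim (tangent_space M x) = dim (tangent_space M y)"
  using ex_C1_submanifold dim_tangent_space by metis

lemma tangent_limit:
  "x \<in> M \<Longrightarrow> (\<And>k. xs k \<in> M) \<Longrightarrow> xs \<longlonglongrightarrow> x \<Longrightarrow> (\<And>k. vs k \<in> tangent_space M (xs k)) \<Longrightarrow>
    vs \<longlonglongrightarrow> v \<Longrightarrow> v \<in> tangent_space M x"
  using ex_C1_submanifold tangent_space_limit by metis

lemma F_into: "F ` M \<subseteq> M"
  using local_diffeo unfolding C1_local_diffeo_def by blast

lemma funpow_in_M: "x \<in> M \<Longrightarrow> (F ^^ n) x \<in> M"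
  using funpow_image_subset[OF F_into, of n] by blast

lemma continuous_F: "continuous_on M F"
proof -
  obtain W where "M \<subseteq> W" "\<forall>x\<in>W. (F has_derivative blinfun_apply (F' x)) (at x)"
    using local_diffeo unfolding C1_local_diffeo_def by blast
  then show ?thesis
    by (meson continuous_at_imp_continuous_on has_derivative_continuous subsetD)
qed

lemma isCont_F': "x \<in> M \<Longrightarrow> isCont F' x"
proof -
  assume "x \<in> M"
  moreover obtain W where "open W" "M \<subseteq> W" "continuous_on W F'"
    using local_diffeo unfolding C1_local_diffeo_def by blast
  ultimately show ?thesis
    using continuous_on_eq_continuous_at by blast
qed

lemma deriv_tangent: "x \<in> M \<Longrightarrow> v \<in> tangent_space M x \<Longrightarrow> F' x v \<in> tangent_space M (F x)"
  using local_diffeo unfolding C1_local_diffeo_def by blast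

lemma deriv_iter_tangent:
  "x \<in> M \<Longrightarrow> v \<in> tangent_space M x \<Longrightarrow> deriv_iter F F' n x v \<in> tangent_space M ((F ^^ n) x)"
proof (induction n)
  case (Suc n)
  then show ?case
    using deriv_tangent[OF funpow_in_M[OF Suc.prems(1)] Suc.IH] by simp
qed simp

definition forward_norm :: "nat \<Rightarrow> 'a \<Rightarrow> 'a \<Rightarrow> real" where
  "forward_norm n x v = rnorm g ((F ^^ n) x) (deriv_iter F F' n x v)"

lemma forward_growth_at:
  assumes x: "x \<in> M"
  shows "forward_growth (tangent_space M x) (\<lambda>n. forward_norm n x) C \<nu> \<gamma>\<^sub>1 \<gamma>\<^sub>2 \<mu>"
proof
  show "subspace (tangent_space M x)"
    using subspace_tangent[OF x] .
  fix n
  have y: "(F ^^ n) x \<in> M"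
    using funpow_in_M[OF x] .
  interpret q: positive_form "g ((F ^^ n) x)" "tangent_space M ((F ^^ n) x)"
    using positive_form_riemannian_metric[OF metric y subspace_tangent[OF y]] .
  fix a b
  assume "a \<in> tangent_space M x" "b \<in> tangent_space M x"
  then show "forward_norm n x (a + b) \<le> forward_norm n x a + forward_norm n x b"
    unfolding forward_norm_def rnorm_def blinfun.add_right
    using q.sqrt_add_le deriv_iter_tangent[OF x] by blast
next
  fix n a
  assume a: "a \<in> tangent_space M x"
  have y: "(F ^^ n) x \<in> M"
    using funpow_in_M[OF x] .
  interpret q: positive_form "g ((F ^^ n) x)" "tangent_space M ((F ^^ n) x)"
    using positive_form_riemannian_metric[OF metric y subspace_tangent[OF y]] .
  show "forward_norm n x (- a) = forward_norm n x a"
    unfolding forward_norm_def rnorm_def blinfun.minus_right q.minus_minus ..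
  show "0 \<le> forward_norm n x a"
    unfolding forward_norm_def rnorm_def using q.nonneg deriv_iter_tangent[OF x a] by simp
next
  fix a
  assume "a \<in> tangent_space M x" "a \<noteq> 0"
  then show "0 < forward_norm 0 x a"
    using metric x unfolding forward_norm_def rnorm_def riemannian_metric_def by simp
qed (use rates in auto)

lemma tendsto_forward_norm:
  assumes x: "x \<in> M" and y: "\<And>k. y k \<in> M" "y \<longlonglongrightarrow> x" and u: "u \<longlonglongrightarrow> v"
  shows "(\<lambda>k. forward_norm n (y k) (u k)) \<longlonglongrightarrow> forward_norm n x v"
proof -
  have funpow: "(\<lambda>k. (F ^^ m) (y k)) \<longlonglongrightarrow> (F ^^ m) x" for m
    by (rule continuous_on_tendsto_compose[OF continuous_on_funpow[OF continuous_F F_into] y(2) x])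
      (simp add: y(1))
  have deriv: "(\<lambda>k. deriv_iter F F' m (y k)) \<longlonglongrightarrow> deriv_iter F F' m x" for m
  proof (induction m)
    case (Suc m)
    have "(\<lambda>k. F' ((F ^^ m) (y k))) \<longlonglongrightarrow> F' ((F ^^ m) x)"
      using isCont_tendsto_compose[OF isCont_F'[OF funpow_in_M[OF x]] funpow] .
    then show ?case
      using Suc by (simp add: tendsto_intros)
  qed simp
  have "continuous_on (M \<times> UNIV \<times> UNIV) (\<lambda>(x, v, w). g x v w)"
    using metric unfolding riemannian_metric_def by blast
  moreover have "(\<lambda>k. ((F ^^ n) (y k), deriv_iter F F' n (y k) (u k), deriv_iter F F' n (y k) (u k)))
      \<longlonglongrightarrow> ((F ^^ n) x, deriv_iter F F' n x v, deriv_iter F F' n x v)"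
    using funpow deriv u by (intro tendsto_Pair blinfun.tendsto)
  ultimately have "(\<lambda>k. g ((F ^^ n) (y k)) (deriv_iter F F' n (y k) (u k)) (deriv_iter F F' n (y k) (u k)))
      \<longlonglongrightarrow> g ((F ^^ n) x) (deriv_iter F F' n x v) (deriv_iter F F' n x v)"
    using continuous_on_tendsto_compose[of _ "\<lambda>(x, v, w). g x v w"] funpow_in_M x y(1) by fastforce
  then show ?thesis
    unfolding forward_norm_def rnorm_def by (rule tendsto_real_sqrt)
qed


definition splitting_at :: "'a \<Rightarrow> 'a set \<Rightarrow> 'a set \<Rightarrow> 'a set \<Rightarrow> bool" where
  "splitting_at x Es Ec Eu \<longleftrightarrow>
     forward_growth.admissible (tangent_space M x) (\<lambda>n. forward_norm n x) C \<nu> \<gamma>\<^sub>1 \<gamma>\<^sub>2 \<mu> Es Ec Eu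
     \<and> dim Es + dim Ec + dim Eu = dim (tangent_space M x)"

lemma splitting_at_iff:
  assumes "x \<in> M"
  shows "splitting_at x Es Ec Eu \<longleftrightarrow>
    subspace Es \<and> subspace Ec \<and> subspace Eu
    \<and> Es \<subseteq> tangent_space M x \<and> Ec \<subseteq> tangent_space M x \<and> Eu \<subseteq> tangent_space M x
    \<and> (\<forall>v\<in>Es. \<forall>n. forward_norm n x v \<le> C * \<nu> ^ n * forward_norm 0 x v)
    \<and> (\<forall>v\<in>Ec. \<forall>n. \<gamma>\<^sub>1 ^ n / C * forward_norm 0 x v \<le> forward_norm n x v
                  \<and> forward_norm n x v \<le> C * \<gamma>\<^sub>2 ^ n * forward_norm 0 x v)
    \<and> (\<forall>v\<in>Eu. \<forall>n. \<mu> ^ n / C * forward_norm 0 x v \<le> forward_norm n x v)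
    \<and> dim Es + dim Ec + dim Eu = dim (tangent_space M x)"
proof -
  interpret forward_growth "tangent_space M x" "\<lambda>n. forward_norm n x" C \<nu> \<gamma>\<^sub>1 \<gamma>\<^sub>2 \<mu>
    by (rule forward_growth_at[OF assms])
  show ?thesis
    unfolding splitting_at_def admissible_def contracting_def central_def expanding_def by simp
qed

lemma splitting_at_dims_unique:
  assumes "x \<in> M" "splitting_at x Es Ec Eu" "splitting_at x Ls Lc Lu"
  shows "(dim Ls, dim Lc, dim Lu) = (dim Es, dim Ec, dim Eu)"
  using forward_growth.admissible_dims_unique[OF forward_growth_at[OF assms(1)], of Es Ec Eu Ls Lc Lu]
    assms(2,3)
  unfolding splitting_at_def by simp

lemma splitting_at_orbit:
  assumes xs: "xs \<in> orbits M F" and split: "ph_splitting M F' g \<nu> \<gamma>\<^sub>1 \<gamma>\<^sub>2 \<mu> C xs Es Ec Eu"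
  shows "splitting_at (xs 0) (Es 0) (Ec 0) (Eu 0)"
proof -
  have norm: "rnorm g (xs (0 + int k)) (orbit_D F' xs 0 k v) = forward_norm k (xs 0) v" for k v
    unfolding forward_norm_def using orbit_funpow[OF xs, of 0 k] orbit_D_eq_deriv_iter[OF xs] by simp
  have norm0: "rnorm g (xs 0) v = forward_norm 0 (xs 0) v" for v
    unfolding forward_norm_def by simp
  have subspaces: "subspace (Es 0)" "subspace (Ec 0)" "subspace (Eu 0)"
    and sum: "{a + b + c | a b c. a \<in> Es 0 \<and> b \<in> Ec 0 \<and> c \<in> Eu 0} = tangent_space M (xs 0)"
    and dims: "dim (Es 0) + dim (Ec 0) + dim (Eu 0) = dim (tangent_space M (xs 0))"
    using split unfolding ph_splitting_def by blast+
  have orbit_in_M: "xs 0 \<in> M"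
    using xs unfolding orbits_def by blast
  have "Es 0 \<union> Ec 0 \<union> Eu 0 \<subseteq> tangent_space M (xs 0)"
    using subset_sum3[of "Es 0" "Ec 0" "Eu 0"] subspaces sum by (simp add: subspace_0)
  moreover have "\<forall>k. \<forall>v\<in>Es 0. rnorm g (xs (0 + int k)) (orbit_D F' xs 0 k v) \<le> C * \<nu> ^ k * rnorm g (xs 0) v"
    and "\<forall>k. \<forall>v\<in>Ec 0. \<gamma>\<^sub>1 ^ k * rnorm g (xs 0) v / C \<le> rnorm g (xs (0 + int k)) (orbit_D F' xs 0 k v)
        \<and> rnorm g (xs (0 + int k)) (orbit_D F' xs 0 k v) \<le> C * \<gamma>\<^sub>2 ^ k * rnorm g (xs 0) v"
    and "\<forall>k. \<forall>v\<in>Eu 0. \<mu> ^ k * rnorm g (xs 0) v / C \<le> rnorm g (xs (0 + int k)) (orbit_D F' xs 0 k v)"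
    using split unfolding ph_splitting_def by blast+
  ultimately show ?thesis
    using subspaces dims unfolding splitting_at_iff[OF orbit_in_M] norm norm0 by simp
qed

lemma splitting_at_limit:
  assumes x: "x \<in> M" and y: "\<And>k. y k \<in> M" "y \<longlonglongrightarrow> x"
    and split: "\<And>k. splitting_at (y k) (Es k) (Ec k) (Eu k)"
    and L: "subspace Ls" "subspace Lc" "subspace Lu"
    and approx: "approximates Ls Es" "approximates Lc Ec" "approximates Lu Eu"
    and dims: "dim Ls + dim Lc + dim Lu = dim (tangent_space M x)"
  shows "splitting_at x Ls Lc Lu"
proof -
  note E = split[unfolded splitting_at_iff[OF y(1)]]
  have lim: "(\<lambda>k. forward_norm n (y k) (vs k)) \<longlonglongrightarrow> forward_norm n x v" if "vs \<longlonglongrightarrow> v" for vs v n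
    using tendsto_forward_norm[OF x y that] .
  have upper: "forward_norm n x v \<le> c * forward_norm 0 x v"
    if "vs \<longlonglongrightarrow> v" "\<And>k. forward_norm n (y k) (vs k) \<le> c * forward_norm 0 (y k) (vs k)" for vs v n c
    using LIMSEQ_le[OF lim[OF that(1)] tendsto_mult_left[OF lim[OF that(1)]]] that(2) by blast
  have lower: "c * forward_norm 0 x v \<le> forward_norm n x v"
    if "vs \<longlonglongrightarrow> v" "\<And>k. c * forward_norm 0 (y k) (vs k) \<le> forward_norm n (y k) (vs k)" for vs v n c
    using LIMSEQ_le[OF tendsto_mult_left[OF lim[OF that(1)]] lim[OF that(1)]] that(2) by blast
  have approx_seq: "\<exists>vs. (\<forall>k. vs k \<in> S k) \<and> vs \<longlonglongrightarrow> v" if "approximates L S" "v \<in> L" for L S v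
    using that unfolding approximates_def by blast
  have in_T: "v \<in> tangent_space M x" if "approximates L S" "\<And>k. S k \<subseteq> tangent_space M (y k)" "v \<in> L"
    for L S v
    using approx_seq[OF that(1,3)] tangent_limit[OF x y(1) y(2)] that(2) by blast
  have "Ls \<subseteq> tangent_space M x" "Lc \<subseteq> tangent_space M x" "Lu \<subseteq> tangent_space M x"
    using in_T approx E by blast+
  moreover have "forward_norm n x v \<le> C * \<nu> ^ n * forward_norm 0 x v" if "v \<in> Ls" for v n
    using approx_seq[OF approx(1) that] upper E by blast
  moreover have "\<gamma>\<^sub>1 ^ n / C * forward_norm 0 x v \<le> forward_norm n x v"
    "forward_norm n x v \<le> C * \<gamma>\<^sub>2 ^ n * forward_norm 0 x v" if "v \<in> Lc" for v n
    using approx_seq[OF approx(2) that] upper lower E by blast+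
  moreover have "\<mu> ^ n / C * forward_norm 0 x v \<le> forward_norm n x v" if "v \<in> Lu" for v n
    using approx_seq[OF approx(3) that] lower E by blast
  ultimately show ?thesis
    using L dims unfolding splitting_at_iff[OF x] by blast
qed

lemma splitting_sequence_limit:
  assumes x: "x \<in> M" and y: "\<And>k. y k \<in> M" "y \<longlonglongrightarrow> x"
    and split: "\<And>k. splitting_at (y k) (Es k) (Ec k) (Eu k)"
    and dims: "\<And>k. dim (Es k) = a" "\<And>k. dim (Ec k) = b" "\<And>k. dim (Eu k) = c"
  obtains Ls Lc Lu where "splitting_at x Ls Lc Lu" "dim Ls = a" "dim Lc = b" "dim Lu = c"
proof -
  note E = split[unfolded splitting_at_iff[OF y(1)]]
  obtain r1 Ls where r1: "strict_mono r1" "subspace Ls" "dim Ls = a" "approximates Ls (Es \<circ> r1)"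
    using subspaces_approximate_subspace[of Es a] E dims(1) by blast
  obtain r2 Lc where r2: "strict_mono r2" "subspace Lc" "dim Lc = b" "approximates Lc (Ec \<circ> r1 \<circ> r2)"
    using subspaces_approximate_subspace[of "Ec \<circ> r1" b] E dims(2) by auto
  obtain r3 Lu where r3: "strict_mono r3" "subspace Lu" "dim Lu = c"
    "approximates Lu (Eu \<circ> r1 \<circ> r2 \<circ> r3)"
    using subspaces_approximate_subspace[of "Eu \<circ> r1 \<circ> r2" c] E dims(3) by auto
  define R where "R = r1 \<circ> r2 \<circ> r3"
  have "strict_mono (r2 \<circ> r3)" "strict_mono R"
    unfolding R_def using r1(1) r2(1) r3(1) by (auto intro: strict_mono_o)
  then have "approximates Ls (Es \<circ> R)" "approximates Lc (Ec \<circ> R)" "approximates Lu (Eu \<circ> R)"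
    using approximates_subseq[OF r1(4)] approximates_subseq[OF r2(4) r3(1)] r3(4)
    unfolding R_def by (simp_all add: comp_assoc)
  moreover have "(y \<circ> R) \<longlonglongrightarrow> x"
    using LIMSEQ_subseq_LIMSEQ[OF y(2) \<open>strict_mono R\<close>] .
  moreover have "dim Ls + dim Lc + dim Lu = dim (tangent_space M x)"
    using E[of 0] dims r1(3) r2(3) r3(3) dim_tangent_eq[OF x y(1)] by simp
  ultimately have "splitting_at x Ls Lc Lu"
    using splitting_at_limit[OF x, of "y \<circ> R" "Es \<circ> R" "Ec \<circ> R" "Eu \<circ> R"] split y(1) r1(2) r2(2) r3(2)
    by simp
  then show ?thesis
    using that r1(3) r2(3) r3(3) by blast
qed

definition dims_locus :: "nat \<times> nat \<times> nat \<Rightarrow> 'a set" where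
  "dims_locus t = {x \<in> M. \<exists>Es Ec Eu. splitting_at x Es Ec Eu \<and> (dim Es, dim Ec, dim Eu) = t}"

lemma closed_dims_locus: "closed (dims_locus (a, b, c))"
  unfolding closed_sequential_limits
proof (intro allI impI)
  fix y x
  assume "(\<forall>k. y k \<in> dims_locus (a, b, c)) \<and> y \<longlonglongrightarrow> x"
  then have y: "\<And>k. y k \<in> M" "y \<longlonglongrightarrow> x"
    and ex: "\<forall>k. \<exists>E. splitting_at (y k) (fst E) (fst (snd E)) (snd (snd E))
                  \<and> dim (fst E) = a \<and> dim (fst (snd E)) = b \<and> dim (snd (snd E)) = c"
    unfolding dims_locus_def by auto
  obtain E where E: "\<forall>k. splitting_at (y k) (fst (E k)) (fst (snd (E k))) (snd (snd (E k)))
                  \<and> dim (fst (E k)) = a \<and> dim (fst (snd (E k))) = b \<and> dim (snd (snd (E k))) = c"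
    using choice[OF ex] by blast
  have "closed M"
    using closed_manifold compact_imp_closed unfolding closed_manifold_def by blast
  then have x: "x \<in> M"
    using y closed_sequential_limits by metis
  obtain Ls Lc Lu where "splitting_at x Ls Lc Lu" "dim Ls = a" "dim Lc = b" "dim Lu = c"
    by (rule splitting_sequence_limit[OF x y, of "\<lambda>k. fst (E k)" "\<lambda>k. fst (snd (E k))" "\<lambda>k. snd (snd (E k))"])
      (use E in simp_all)
  then show "x \<in> dims_locus (a, b, c)"
    unfolding dims_locus_def using x by blast
qed

lemma disjoint_dims_locus: "disjoint_family_on dims_locus I"
  unfolding disjoint_family_on_def
proof (intro ballI impI)
  fix t t' :: "nat \<times> nat \<times> nat"
  assume "t \<noteq> t'"
  have "t = t'" if x: "x \<in> dims_locus t" "x \<in> dims_locus t'" for x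
  proof -
    obtain Es Ec Eu Ls Lc Lu where "x \<in> M" "splitting_at x Es Ec Eu" "(dim Es, dim Ec, dim Eu) = t"
      "splitting_at x Ls Lc Lu" "(dim Ls, dim Lc, dim Lu) = t'"
      using x unfolding dims_locus_def by blast
    then show ?thesis
      using splitting_at_dims_unique by metis
  qed
  then show "dims_locus t \<inter> dims_locus t' = {}"
    using \<open>t \<noteq> t'\<close> by blast
qed

lemma orbit_in_dims_locus:
  assumes "xs \<in> orbits M F" "ph_splitting M F' g \<nu> \<gamma>\<^sub>1 \<gamma>\<^sub>2 \<mu> C xs Es Ec Eu"
  shows "xs 0 \<in> dims_locus (dim (Es 0), dim (Ec 0), dim (Eu 0))"
proof -
  have "xs 0 \<in> M"
    using assms(1) unfolding orbits_def by blast
  then show ?thesis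
    using splitting_at_orbit[OF assms] unfolding dims_locus_def by blast
qed

lemma eventual_image_dims_locus:
  assumes "\<forall>xs\<in>orbits M F. \<exists>Es Ec Eu. ph_splitting M F' g \<nu> \<gamma>\<^sub>1 \<gamma>\<^sub>2 \<mu> C xs Es Ec Eu"
    and "x \<in> eventual_image F M"
  shows "\<exists>t\<in>{..DIM('a)} \<times> {..DIM('a)} \<times> {..DIM('a)}. x \<in> dims_locus t"
proof -
  have "compact M"
    using closed_manifold unfolding closed_manifold_def by blast
  then obtain xs where xs: "xs \<in> orbits M F" "xs 0 = x"
    using eventual_image_orbit[OF _ continuous_F F_into assms(2)] by blast
  then obtain Es Ec Eu where "ph_splitting M F' g \<nu> \<gamma>\<^sub>1 \<gamma>\<^sub>2 \<mu> C xs Es Ec Eu"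
    using assms(1) by blast
  then have "x \<in> dims_locus (dim (Es 0), dim (Ec 0), dim (Eu 0))"
    using orbit_in_dims_locus[OF xs(1)] xs(2) by simp
  moreover have "(dim (Es 0), dim (Ec 0), dim (Eu 0)) \<in> {..DIM('a)} \<times> {..DIM('a)} \<times> {..DIM('a)}"
    by (simp add: dim_subset_UNIV)
  ultimately show ?thesis
    by blast
qed

lemma ph_splitting_dims_eq:
  assumes "\<forall>xs\<in>orbits M F. \<exists>Es Ec Eu. ph_splitting M F' g \<nu> \<gamma>\<^sub>1 \<gamma>\<^sub>2 \<mu> C xs Es Ec Eu"
    and "xs \<in> orbits M F" "ph_splitting M F' g \<nu> \<gamma>\<^sub>1 \<gamma>\<^sub>2 \<mu> C xs Es Ec Eu"
    and "ys \<in> orbits M F" "ph_splitting M F' g \<nu> \<gamma>\<^sub>1 \<gamma>\<^sub>2 \<mu> C ys Ls Lc Lu"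
  shows "(dim (Ls 0), dim (Lc 0), dim (Lu 0)) = (dim (Es 0), dim (Ec 0), dim (Eu 0))"
proof (rule connected_disjoint_closed_cover_unique)
  let ?I = "{..DIM('a)} \<times> {..DIM('a)} \<times> {..DIM('a)}"
  show "connected (eventual_image F M)"
    using closed_manifold connected_eventual_image[OF _ continuous_F F_into]
    unfolding closed_manifold_def by blast
  show "finite ?I" "disjoint_family_on dims_locus ?I"
    by (simp_all add: disjoint_dims_locus)
  show "closed (dims_locus t)" for t
    using closed_dims_locus by (cases t) simp
  show "eventual_image F M \<subseteq> (\<Union>t\<in>?I. dims_locus t)"
    using eventual_image_dims_locus[OF assms(1)] by blast
  show "(dim (Ls 0), dim (Lc 0), dim (Lu 0)) \<in> ?I" "(dim (Es 0), dim (Ec 0), dim (Eu 0)) \<in> ?I"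
    by (simp_all add: dim_subset_UNIV)
  show "ys 0 \<in> eventual_image F M \<inter> dims_locus (dim (Ls 0), dim (Lc 0), dim (Lu 0))"
    "xs 0 \<in> eventual_image F M \<inter> dims_locus (dim (Es 0), dim (Ec 0), dim (Eu 0))"
    using orbit_in_eventual_image orbit_in_dims_locus assms(2-5) by blast+
qed

end

theorem mainTheorem13:
  fixes M :: "'a::euclidean_space set" and F :: "'a \<Rightarrow> 'a" and F' :: "'a \<Rightarrow> 'a \<Rightarrow>\<^sub>L 'a"
    and g :: "'a \<Rightarrow> 'a \<Rightarrow> 'a \<Rightarrow> real"
    and \<nu> \<gamma>\<^sub>1 \<gamma>\<^sub>2 \<mu> C :: real
  assumes "closed_manifold M"
    and "C1_local_diffeo M F F'"
    and "riemannian_metric M g"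
    and "0 < \<nu>" and "\<nu> < \<gamma>\<^sub>1" and "\<gamma>\<^sub>1 \<le> \<gamma>\<^sub>2" and "\<gamma>\<^sub>2 < \<mu>" and "\<nu> < 1" and "1 < \<mu>" and "C > 1"
    and "\<forall>xs\<in>orbits M F. \<exists>Es Ec Eu. ph_splitting M F' g \<nu> \<gamma>\<^sub>1 \<gamma>\<^sub>2 \<mu> C xs Es Ec Eu"
  shows "\<exists>ds dc du. \<forall>xs\<in>orbits M F. \<forall>Es Ec Eu.
           ph_splitting M F' g \<nu> \<gamma>\<^sub>1 \<gamma>\<^sub>2 \<mu> C xs Es Ec Eu \<longrightarrow>
             dim (Es 0) = ds \<and> dim (Ec 0) = dc \<and> dim (Eu 0) = du"
proof (cases "\<exists>xs\<in>orbits M F. \<exists>Es Ec Eu. ph_splitting M F' g \<nu> \<gamma>\<^sub>1 \<gamma>\<^sub>2 \<mu> C xs Es Ec Eu")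
  case True
  then obtain ys Ls Lc Lu where ys: "ys \<in> orbits M F" "ph_splitting M F' g \<nu> \<gamma>\<^sub>1 \<gamma>\<^sub>2 \<mu> C ys Ls Lc Lu"
    by blast
  interpret ph_setting M F F' g \<nu> \<gamma>\<^sub>1 \<gamma>\<^sub>2 \<mu> C
    using assms by unfold_locales auto
  show ?thesis
  proof (intro exI ballI allI impI)
    fix xs Es Ec Eu
    assume "xs \<in> orbits M F" "ph_splitting M F' g \<nu> \<gamma>\<^sub>1 \<gamma>\<^sub>2 \<mu> C xs Es Ec Eu"
    then show "dim (Es 0) = dim (Ls 0) \<and> dim (Ec 0) = dim (Lc 0) \<and> dim (Eu 0) = dim (Lu 0)"
      using ph_splitting_dims_eq[OF assms(11) ys] by simp
  qed
qed blast

end
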